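(* Let $\mathcal{R}$ be a TRS, $s$ a total term, and $S$ a reduction strongly $p$-converging from $s$ to $t$. Then $S$ is total (all its terms and $t$ are total) iff no prefix of $S$ has a volatile position.
   Context: Total terms contain no $\bot$; partial terms are terms over $\Sigma_\bot=\Sigma\uplus\{\bot\}$ ordered by $\le_\bot$ (replacing subterms by $\bot$), a complete semilattice; $\liminf_{\iota\to\alpha}a_\iota=\bigvee_{\beta<\alpha}\bigwedge_{\beta\le\iota<\alpha}a_\iota$. A reduction $S=(t_\iota\to_{\pi_\iota}t_{\iota+1})_{\iota<\alpha}$ with contexts $c_\iota$ ($t_\iota$ with position $\pi_\iota$ replaced by $\bot$) strongly $p$-converges to $t$ if $\liminf_{\iota\to\lambda}c_\iota=t_\lambda$ for every limit $\lambda<\alpha$ and $t$ is the last term (closed) or $t=\liminf_{\iota\to\alpha}c_\iota$ (open). A position $\pi$ is volatile in an open reduction $(t_\iota\to_{\pi_\iota}t_{\iota+1})_{\iota<\lambda}$ if for every $\beta<\lambda$ there is $\beta\le\gamma<\lambda$ with $\pi_\gamma=\pi$; a prefix of $S$ is $S|_\beta=(t_\iota\to_{\pi_\iota}t_{\iota+1})_{\iota<\beta}$, $\beta\le\alpha$. *)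

theory Defs
  imports Main
begin

text \<open>Symbols of Sigma_bot plus variables. A (partial) term is a map from positions
(nat lists) to symbols, undefined (None) outside its set of positions.\<close>

datatype ('f, 'v) sym = Fun 'f | Var 'v | Bot

type_synonym ('f, 'v) pterm = "nat list \<Rightarrow> ('f, 'v) sym option"

definition wf_pterm :: "('f \<Rightarrow> nat) \<Rightarrow> ('f, 'v) pterm \<Rightarrow> bool" where
  "wf_pterm ar t \<longleftrightarrow>
     t [] \<noteq> None \<and>
     (\<forall>p i. t (p @ [i]) \<noteq> None \<longrightarrow> (\<exists>f. t p = Some (Fun f) \<and> i < ar f)) \<and>
     (\<forall>p f i. t p = Some (Fun f) \<and> i < ar f \<longrightarrow> t (p @ [i]) \<noteq> None)"

definition poss :: "('f, 'v) pterm \<Rightarrow> nat list set" where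
  "poss t = {p. t p \<noteq> None}"

definition total_term :: "('f, 'v) pterm \<Rightarrow> bool" where
  "total_term t \<longleftrightarrow> (\<forall>p. t p \<noteq> Some Bot)"

definition finite_term :: "('f, 'v) pterm \<Rightarrow> bool" where
  "finite_term t \<longleftrightarrow> finite (poss t)"

definition vars_term :: "('f, 'v) pterm \<Rightarrow> 'v set" where
  "vars_term t = {x. \<exists>p. t p = Some (Var x)}"

text \<open>The order le_bot: s is obtained from t by replacing subterms by Bot.\<close>
definition le_bot :: "('f, 'v) pterm \<Rightarrow> ('f, 'v) pterm \<Rightarrow> bool" where
  "le_bot s t \<longleftrightarrow> (\<forall>p. s p \<noteq> None \<longrightarrow> t p \<noteq> None) \<and>
                  (\<forall>p. s p \<noteq> None \<and> s p \<noteq> Some Bot \<longrightarrow> s p = t p)"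

definition bot_term :: "('f, 'v) pterm" where
  "bot_term = (\<lambda>p. if p = [] then Some Bot else None)"

definition subterm_at :: "('f, 'v) pterm \<Rightarrow> nat list \<Rightarrow> ('f, 'v) pterm" where
  "subterm_at t \<pi> = (\<lambda>p. t (\<pi> @ p))"

definition replace_at :: "('f, 'v) pterm \<Rightarrow> nat list \<Rightarrow> ('f, 'v) pterm \<Rightarrow> ('f, 'v) pterm" where
  "replace_at t \<pi> u = (\<lambda>p. if \<exists>q. p = \<pi> @ q then u (drop (length \<pi>) p) else t p)"

definition subst_apply :: "('v \<Rightarrow> ('f, 'v) pterm) \<Rightarrow> ('f, 'v) pterm \<Rightarrow> ('f, 'v) pterm" where
  "subst_apply \<sigma> l = (\<lambda>p.
     if \<exists>q r x. p = q @ r \<and> l q = Some (Var x)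
     then (let (q, r, x) = (SOME (q, r, x). p = q @ r \<and> l q = Some (Var x)) in \<sigma> x r)
     else l p)"

definition is_TRS :: "('f \<Rightarrow> nat) \<Rightarrow> (('f, 'v) pterm \<times> ('f, 'v) pterm) set \<Rightarrow> bool" where
  "is_TRS ar R \<longleftrightarrow> (\<forall>(l, r) \<in> R.
      wf_pterm ar l \<and> wf_pterm ar r \<and> total_term l \<and> total_term r \<and>
      finite_term l \<and> finite_term r \<and> (\<exists>f. l [] = Some (Fun f)) \<and>
      vars_term r \<subseteq> vars_term l)"

definition rstep :: "('f \<Rightarrow> nat) \<Rightarrow> (('f, 'v) pterm \<times> ('f, 'v) pterm) set \<Rightarrow>
    ('f, 'v) pterm \<Rightarrow> nat list \<Rightarrow> ('f, 'v) pterm \<Rightarrow> bool" where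
  "rstep ar R t \<pi> t' \<longleftrightarrow> wf_pterm ar t \<and> wf_pterm ar t' \<and> \<pi> \<in> poss t \<and>
     (\<exists>l r \<sigma>. (l, r) \<in> R \<and> (\<forall>x. wf_pterm ar (\<sigma> x)) \<and>
        subterm_at t \<pi> = subst_apply \<sigma> l \<and> t' = replace_at t \<pi> (subst_apply \<sigma> r))"

definition is_glb :: "('f \<Rightarrow> nat) \<Rightarrow> ('f, 'v) pterm set \<Rightarrow> ('f, 'v) pterm \<Rightarrow> bool" where
  "is_glb ar A t \<longleftrightarrow> wf_pterm ar t \<and> (\<forall>a\<in>A. le_bot t a) \<and>
     (\<forall>u. wf_pterm ar u \<and> (\<forall>a\<in>A. le_bot u a) \<longrightarrow> le_bot u t)"

definition is_lub :: "('f \<Rightarrow> nat) \<Rightarrow> ('f, 'v) pterm set \<Rightarrow> ('f, 'v) pterm \<Rightarrow> bool" where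
  "is_lub ar A t \<longleftrightarrow> wf_pterm ar t \<and> (\<forall>a\<in>A. le_bot a t) \<and>
     (\<forall>u. wf_pterm ar u \<and> (\<forall>a\<in>A. le_bot a u) \<longrightarrow> le_bot t u)"

text \<open>Ordinal-indexed sequences are indexed by elements of an arbitrary well-order.
is_liminf ar lam a t: t = liminf_{iota -> lam} a_iota
  = Join_{beta<lam} Meet_{beta <= iota < lam} a_iota.\<close>
definition is_liminf :: "('f \<Rightarrow> nat) \<Rightarrow> 'o::wellorder \<Rightarrow> ('o \<Rightarrow> ('f, 'v) pterm) \<Rightarrow> ('f, 'v) pterm \<Rightarrow> bool" where
  "is_liminf ar lam a t \<longleftrightarrow>
     (\<exists>g. (\<forall>\<beta><lam. is_glb ar {a \<iota> | \<iota>. \<beta> \<le> \<iota> \<and> \<iota> < lam} (g \<beta>)) \<and>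
          is_lub ar {g \<beta> | \<beta>. \<beta> < lam} t)"

definition osucc :: "'o::wellorder \<Rightarrow> 'o" where
  "osucc i = (LEAST j. i < j)"

definition is_limit :: "'o::wellorder \<Rightarrow> bool" where
  "is_limit lam \<longleftrightarrow> (\<exists>i. i < lam) \<and> (\<forall>i<lam. \<exists>j. i < j \<and> j < lam)"

text \<open>A reduction S = (t_iota ->_{pi_iota} t_{iota+1})_{iota<alpha} is given by
ts (terms, t_iota for iota <= alpha), ps (positions) and the length alpha.\<close>
definition is_reduction :: "('f \<Rightarrow> nat) \<Rightarrow> (('f, 'v) pterm \<times> ('f, 'v) pterm) set \<Rightarrow>
    ('o::wellorder \<Rightarrow> ('f, 'v) pterm) \<Rightarrow> ('o \<Rightarrow> nat list) \<Rightarrow> 'o \<Rightarrow> bool" where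
  "is_reduction ar R ts ps \<alpha> \<longleftrightarrow> (\<forall>\<iota><\<alpha>. rstep ar R (ts \<iota>) (ps \<iota>) (ts (osucc \<iota>)))"

definition ctxt_at :: "('o \<Rightarrow> ('f, 'v) pterm) \<Rightarrow> ('o \<Rightarrow> nat list) \<Rightarrow> 'o \<Rightarrow> ('f, 'v) pterm" where
  "ctxt_at ts ps \<iota> = replace_at (ts \<iota>) (ps \<iota>) bot_term"

definition strongly_p_converges :: "('f \<Rightarrow> nat) \<Rightarrow> (('f, 'v) pterm \<times> ('f, 'v) pterm) set \<Rightarrow>
    ('o::wellorder \<Rightarrow> ('f, 'v) pterm) \<Rightarrow> ('o \<Rightarrow> nat list) \<Rightarrow> 'o \<Rightarrow>
    ('f, 'v) pterm \<Rightarrow> ('f, 'v) pterm \<Rightarrow> bool" where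
  "strongly_p_converges ar R ts ps \<alpha> s t \<longleftrightarrow>
     is_reduction ar R ts ps \<alpha> \<and> ts (LEAST i. True) = s \<and>
     (\<forall>lam<\<alpha>. is_limit lam \<longrightarrow> is_liminf ar lam (ctxt_at ts ps) (ts lam)) \<and>
     (if is_limit \<alpha> then is_liminf ar \<alpha> (ctxt_at ts ps) t else t = ts \<alpha>)"

definition volatile_in_prefix :: "('o::wellorder \<Rightarrow> nat list) \<Rightarrow> 'o \<Rightarrow> nat list \<Rightarrow> bool" where
  "volatile_in_prefix ps \<beta> \<pi> \<longleftrightarrow> is_limit \<beta> \<and>
     (\<forall>\<beta>'<\<beta>. \<exists>\<gamma>. \<beta>' \<le> \<gamma> \<and> \<gamma> < \<beta> \<and> ps \<gamma> = \<pi>)"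

definition reduction_total :: "('o::wellorder \<Rightarrow> ('f, 'v) pterm) \<Rightarrow> 'o \<Rightarrow> ('f, 'v) pterm \<Rightarrow> bool" where
  "reduction_total ts \<alpha> t \<longleftrightarrow> (\<forall>\<iota><\<alpha>. total_term (ts \<iota>)) \<and> total_term t"

end

theory Submission
  imports Defs "HOL-Library.Sublist"
begin

(*
  Steps preserve totality, so only limit terms can acquire Bot. Below a limit, a finite
  prefix-closed set of positions that are hit by steps only finitely often is eventually
  avoided; from then on the terms, and hence the contexts, agree on it, and the limit
  inferior inherits these values. If the limit had Bot at some position although no position
  is volatile, all prefixes of that position settle, so the Bot would already occur in an
  earlier, total term. Conversely, at a shortest volatile position all proper prefixes
  settle, so the limit is defined there; but every meet of a tail of contexts has a hole
  there, so the limit is Bot.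
*)

lemma wf_pterm_prefix_defined:
  assumes wf: "wf_pterm ar t" and "prefix p q" and "t q \<noteq> None"
  shows "t p \<noteq> None"
  using assms(2,3)
proof (induction q rule: rev_induct)
  case Nil
  then show ?case by simp
next
  case (snoc i q)
  show ?case
  proof (cases "p = q @ [i]")
    case True
    then show ?thesis using snoc.prems by simp
  next
    case False
    then have "prefix p q" using snoc.prems(1) by simp
    moreover have "t q \<noteq> None" using wf snoc.prems(2) unfolding wf_pterm_def by blast
    ultimately show ?thesis using snoc.IH by blast
  qed
qed

lemma wf_pterm_leaf:
  assumes wf: "wf_pterm ar t" and "\<forall>f. t q \<noteq> Some (Fun f)" and "t (q @ r) \<noteq> None"
  shows "r = []"
proof (rule ccontr)
  assume "r \<noteq> []"
  then obtain i where "prefix (q @ [i]) (q @ r)" by (cases r) auto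
  then have "t (q @ [i]) \<noteq> None" using wf_pterm_prefix_defined[OF wf] assms(3) by blast
  then show False using wf assms(2) unfolding wf_pterm_def by blast
qed

lemma wf_pterm_defined_if_agree_on_strict_prefixes:
  assumes wf: "wf_pterm ar s" "wf_pterm ar t" and "s \<pi> \<noteq> None"
    and "\<And>p. strict_prefix p \<pi> \<Longrightarrow> t p \<noteq> None \<Longrightarrow> t p = s p"
  shows "t \<pi> \<noteq> None"
  using assms(3,4)
proof (induction \<pi> rule: rev_induct)
  case Nil
  then show ?case using wf(2) unfolding wf_pterm_def by blast
next
  case (snoc i \<pi>)
  have "s \<pi> \<noteq> None" by (rule wf_pterm_prefix_defined[OF wf(1) _ snoc.prems(1)]) simp
  moreover have "strict_prefix p (\<pi> @ [i])" if "strict_prefix p \<pi>" for p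
    using that by (auto simp: strict_prefix_def dest: prefix_length_le)
  ultimately have "t \<pi> \<noteq> None" using snoc by blast
  moreover have "strict_prefix \<pi> (\<pi> @ [i])" by (simp add: strict_prefix_def)
  ultimately have "t \<pi> = s \<pi>" using snoc.prems(2) by blast
  moreover obtain f where "s \<pi> = Some (Fun f)" "i < ar f"
    using wf(1) snoc.prems(1) unfolding wf_pterm_def by blast
  ultimately show ?case using wf(2) unfolding wf_pterm_def by metis
qed

lemma replace_at_bot_term:
  "replace_at t \<pi> bot_term p = (if p = \<pi> then Some Bot else if prefix \<pi> p then None else t p)"
  unfolding replace_at_def bot_term_def prefix_def by auto

lemma wf_pterm_replace_at_bot_term:
  assumes wf: "wf_pterm ar t" and pos: "t \<pi> \<noteq> None"
  shows "wf_pterm ar (replace_at t \<pi> bot_term)" (is "wf_pterm ar ?u")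
  unfolding wf_pterm_def
proof (intro conjI allI impI)
  show "?u [] \<noteq> None" using wf by (auto simp: replace_at_bot_term wf_pterm_def)
next
  fix p i
  assume "?u (p @ [i]) \<noteq> None"
  then have outside: "\<not> prefix \<pi> p" and "t (p @ [i]) \<noteq> None"
    using pos by (auto simp: replace_at_bot_term dest: prefix_length_le split: if_splits)
  then obtain f where "t p = Some (Fun f)" "i < ar f" using wf unfolding wf_pterm_def by blast
  then show "\<exists>f. ?u p = Some (Fun f) \<and> i < ar f" using outside by (auto simp: replace_at_bot_term)
next
  fix p f i
  assume "?u p = Some (Fun f) \<and> i < ar f"
  then have outside: "\<not> prefix \<pi> p" and "t p = Some (Fun f)" and "i < ar f"
    by (auto simp: replace_at_bot_term split: if_splits)
  then have "t (p @ [i]) \<noteq> None" using wf unfolding wf_pterm_def by blast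
  with outside show "?u (p @ [i]) \<noteq> None" by (auto simp: replace_at_bot_term)
qed

lemma var_position_unique:
  assumes wf: "wf_pterm ar l" and "l q = Some (Var x)" "l q' = Some (Var x')"
    and "q @ r = q' @ r'"
  shows "q = q'"
proof -
  from assms(4) obtain us where "q = q' @ us \<and> r' = us @ r \<or> q' = q @ us \<and> r = us @ r'"
    by (metis append_eq_append_conv2)
  then show ?thesis
    using wf_pterm_leaf[OF wf, of q' us] wf_pterm_leaf[OF wf, of q us] assms(2,3) by auto
qed

lemma subst_apply_at_var:
  assumes wf: "wf_pterm ar l" and lq: "l q = Some (Var x)"
  shows "subst_apply \<sigma> l (q @ r) = \<sigma> x r"
proof -
  have "(SOME (q', r', x'). q @ r = q' @ r' \<and> l q' = Some (Var x')) = (q, r, x)"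
  proof (rule some_equality)
    fix z
    assume "case z of (q', r', x') \<Rightarrow> q @ r = q' @ r' \<and> l q' = Some (Var x')"
    then obtain q' r' x' where z: "z = (q', r', x')" "q @ r = q' @ r'" "l q' = Some (Var x')"
      by (cases z) auto
    then have "q = q'" using var_position_unique[OF wf lq z(3)] by blast
    then show "z = (q, r, x)" using z lq by simp
  qed (use lq in simp)
  then show ?thesis unfolding subst_apply_def using lq by auto
qed

lemma rstep_total_term:
  assumes trs: "is_TRS ar R" and step: "rstep ar R t \<pi> t'" and tot: "total_term t"
  shows "total_term t'"
proof -
  obtain l r \<sigma> where lr: "(l, r) \<in> R" and redex: "subterm_at t \<pi> = subst_apply \<sigma> l"
    and t': "t' = replace_at t \<pi> (subst_apply \<sigma> r)"
    using step unfolding rstep_def by blast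
  have wfl: "wf_pterm ar l" and wfr: "wf_pterm ar r" and totr: "total_term r"
    and vars: "vars_term r \<subseteq> vars_term l"
    using trs lr unfolding is_TRS_def by auto
  have "subst_apply \<sigma> r q \<noteq> Some Bot" for q
  proof (cases "\<exists>q1 r1 x. q = q1 @ r1 \<and> r q1 = Some (Var x)")
    case True
    then obtain q1 r1 x where q: "q = q1 @ r1" "r q1 = Some (Var x)" by blast
    then have "x \<in> vars_term l" using vars unfolding vars_term_def by blast
    then obtain q0 where q0: "l q0 = Some (Var x)" unfolding vars_term_def by blast
    have "subst_apply \<sigma> r q = \<sigma> x r1" using subst_apply_at_var[OF wfr q(2)] q(1) by simp
    also have "\<dots> = subst_apply \<sigma> l (q0 @ r1)" using subst_apply_at_var[OF wfl q0] by simp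
    also have "\<dots> = t (\<pi> @ q0 @ r1)" using redex unfolding subterm_at_def by metis
    finally show ?thesis using tot unfolding total_term_def by simp
  next
    case False
    then show ?thesis using totr unfolding subst_apply_def total_term_def by metis
  qed
  then show ?thesis using tot unfolding total_term_def t' replace_at_def by auto
qed

lemma rstep_unchanged_outside: "rstep ar R t \<pi> t' \<Longrightarrow> \<not> prefix \<pi> p \<Longrightarrow> t' p = t p"
  unfolding rstep_def replace_at_def prefix_def by auto

definition prefix_closed :: "'a list set \<Rightarrow> bool" where
  "prefix_closed Q \<longleftrightarrow> (\<forall>p\<in>Q. \<forall>q. prefix q p \<longrightarrow> q \<in> Q)"

lemma prefix_closed_not_prefix: "prefix_closed Q \<Longrightarrow> p \<in> Q \<Longrightarrow> q \<notin> Q \<Longrightarrow> \<not> prefix q p"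
  unfolding prefix_closed_def by blast

definition truncate :: "('f, 'v) pterm \<Rightarrow> nat list set \<Rightarrow> ('f, 'v) pterm" where
  "truncate w Q = (\<lambda>p. if p \<in> Q then w p
     else if (\<exists>q i. p = q @ [i] \<and> q \<in> Q) \<and> w p \<noteq> None then Some Bot else None)"

lemma wf_pterm_truncate:
  assumes wf: "wf_pterm ar w" and Q: "Q \<subseteq> poss w" "prefix_closed Q" "Q \<noteq> {}"
  shows "wf_pterm ar (truncate w Q)"
  unfolding wf_pterm_def
proof (intro conjI allI impI)
  have "[] \<in> Q" using Q(2,3) unfolding prefix_closed_def by auto
  then show "truncate w Q [] \<noteq> None" using Q(1) by (auto simp: truncate_def poss_def)
next
  fix p i
  assume "truncate w Q (p @ [i]) \<noteq> None"
  then have "p \<in> Q" and "w (p @ [i]) \<noteq> None"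
    using Q(1,2) unfolding truncate_def prefix_closed_def poss_def by (auto split: if_splits)
  then show "\<exists>f. truncate w Q p = Some (Fun f) \<and> i < ar f"
    using wf unfolding wf_pterm_def truncate_def by auto
next
  fix p f i
  assume "truncate w Q p = Some (Fun f) \<and> i < ar f"
  then have "p \<in> Q" and "w (p @ [i]) \<noteq> None"
    using wf unfolding truncate_def wf_pterm_def by (auto split: if_splits)
  then show "truncate w Q (p @ [i]) \<noteq> None" using Q(1) unfolding truncate_def poss_def by auto
qed

lemma le_bot_truncate:
  assumes wf: "wf_pterm ar w" "wf_pterm ar b" and Q: "Q \<subseteq> poss w"
    and agree: "\<forall>p\<in>Q. b p = w p"
  shows "le_bot (truncate w Q) b"
  unfolding le_bot_def
proof (intro conjI allI impI)
  fix p
  assume defined: "truncate w Q p \<noteq> None"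
  show "b p \<noteq> None"
  proof (cases "p \<in> Q")
    case True
    then show ?thesis using agree Q unfolding poss_def by auto
  next
    case False
    then obtain q i where "p = q @ [i]" "q \<in> Q" "w p \<noteq> None"
      using defined unfolding truncate_def by (auto split: if_splits)
    then show ?thesis using wf agree unfolding wf_pterm_def by metis
  qed
next
  fix p
  assume "truncate w Q p \<noteq> None \<and> truncate w Q p \<noteq> Some Bot"
  then show "truncate w Q p = b p" using agree unfolding truncate_def by (auto split: if_splits)
qed

lemma liminf_eq_eventual_values:
  assumes lim: "is_liminf ar lam a T" and "\<beta>0 < lam"
    and w: "wf_pterm ar w" "total_term w" "Q \<subseteq> poss w" "prefix_closed Q"
    and eventually: "\<forall>\<iota>. \<beta>0 \<le> \<iota> \<and> \<iota> < lam \<longrightarrow> wf_pterm ar (a \<iota>) \<and> (\<forall>p\<in>Q. a \<iota> p = w p)"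
    and "p \<in> Q"
  shows "T p = w p"
proof -
  from lim obtain g where glb: "\<forall>\<beta><lam. is_glb ar {a \<iota> | \<iota>. \<beta> \<le> \<iota> \<and> \<iota> < lam} (g \<beta>)"
    and lub: "is_lub ar {g \<beta> | \<beta>. \<beta> < lam} T"
    unfolding is_liminf_def by blast
  have "wf_pterm ar (truncate w Q)" using wf_pterm_truncate[OF w(1,3,4)] \<open>p \<in> Q\<close> by blast
  moreover have "\<forall>b\<in>{a \<iota> | \<iota>. \<beta>0 \<le> \<iota> \<and> \<iota> < lam}. le_bot (truncate w Q) b"
    using le_bot_truncate[OF w(1) _ w(3)] eventually by blast
  ultimately have "le_bot (truncate w Q) (g \<beta>0)"
    using glb \<open>\<beta>0 < lam\<close> unfolding is_glb_def by blast
  moreover have "le_bot (g \<beta>0) T" using lub \<open>\<beta>0 < lam\<close> unfolding is_lub_def by blast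
  ultimately have "le_bot (truncate w Q) T" unfolding le_bot_def by metis
  moreover have "truncate w Q p = w p" "w p \<noteq> None" "w p \<noteq> Some Bot"
    using \<open>p \<in> Q\<close> w(2,3) unfolding truncate_def poss_def total_term_def by auto
  ultimately show ?thesis unfolding le_bot_def by metis
qed

lemma is_lub_Bot:
  assumes lub: "is_lub ar A T" and wfA: "\<forall>a\<in>A. wf_pterm ar a" and "T p \<noteq> None"
    and below: "\<forall>a\<in>A. a p = None \<or> a p = Some Bot"
  shows "T p = Some Bot"
proof -
  let ?u = "replace_at T p bot_term"
  \<comment> \<open>Cutting \<open>T\<close> off at \<open>p\<close> still leaves an upper bound of \<open>A\<close>, which \<open>T\<close> must lie below.\<close>
  have upper: "le_bot a ?u" if "a \<in> A" for a
  proof -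
    have "le_bot a T" using lub \<open>a \<in> A\<close> unfolding is_lub_def by blast
    moreover have "x = p \<or> \<not> prefix p x" if "a x \<noteq> None" for x
      using wf_pterm_leaf[of ar a p] wfA below \<open>a \<in> A\<close> that unfolding prefix_def by fastforce
    ultimately show ?thesis
      using below \<open>a \<in> A\<close> unfolding le_bot_def replace_at_bot_term by metis
  qed
  have "wf_pterm ar T" using lub unfolding is_lub_def by blast
  then have "le_bot T ?u"
    using lub upper wf_pterm_replace_at_bot_term[OF \<open>wf_pterm ar T\<close> \<open>T p \<noteq> None\<close>]
    unfolding is_lub_def by blast
  then show ?thesis using \<open>T p \<noteq> None\<close> unfolding le_bot_def replace_at_bot_term by auto
qed

lemma liminf_ctxt_at_volatile_Bot:
  assumes lim: "is_liminf ar lam (ctxt_at ts ps) T" and vol: "volatile_in_prefix ps lam \<pi>"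
    and "T \<pi> \<noteq> None"
  shows "T \<pi> = Some Bot"
proof -
  from lim obtain g
    where glb: "\<forall>\<beta><lam. is_glb ar {ctxt_at ts ps \<iota> | \<iota>. \<beta> \<le> \<iota> \<and> \<iota> < lam} (g \<beta>)"
      and lub: "is_lub ar {g \<beta> | \<beta>. \<beta> < lam} T"
    unfolding is_liminf_def by blast
  have below: "\<forall>a\<in>{g \<beta> | \<beta>. \<beta> < lam}. a \<pi> = None \<or> a \<pi> = Some Bot"
  proof
    fix a
    assume "a \<in> {g \<beta> | \<beta>. \<beta> < lam}"
    then obtain \<beta> where "a = g \<beta>" "\<beta> < lam" by blast
    moreover obtain \<gamma> where "\<beta> \<le> \<gamma>" "\<gamma> < lam" "ps \<gamma> = \<pi>"
      using vol \<open>\<beta> < lam\<close> unfolding volatile_in_prefix_def by blast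
    ultimately have "le_bot a (ctxt_at ts ps \<gamma>)" using glb unfolding is_glb_def by blast
    moreover have "ctxt_at ts ps \<gamma> \<pi> = Some Bot"
      using \<open>ps \<gamma> = \<pi>\<close> by (simp add: ctxt_at_def replace_at_bot_term)
    ultimately show "a \<pi> = None \<or> a \<pi> = Some Bot" unfolding le_bot_def by (metis sym.simps(3))
  qed
  have "\<forall>a\<in>{g \<beta> | \<beta>. \<beta> < lam}. wf_pterm ar a" using glb unfolding is_glb_def by blast
  from is_lub_Bot[OF lub this \<open>T \<pi> \<noteq> None\<close> below] show ?thesis .
qed

lemma osucc_le: "j < i \<Longrightarrow> osucc j \<le> i"
  unfolding osucc_def by (rule Least_le)

lemma Least_True_eq: "\<not> (\<exists>j. j < (i::'o::wellorder)) \<Longrightarrow> (LEAST j. True) = i"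
  by (rule Least_equality) (auto simp: not_less)

lemma non_limit_osucc:
  fixes i :: "'o::wellorder"
  assumes "\<exists>j. j < i" and "\<not> is_limit i"
  shows "\<exists>j<i. osucc j = i"
proof -
  from assms obtain j where "j < i" "\<forall>k. j < k \<longrightarrow> \<not> k < i" unfolding is_limit_def by blast
  moreover from this have "osucc j = i"
    unfolding osucc_def by (intro Least_equality) (auto simp: not_less)
  ultimately show ?thesis by blast
qed

lemma is_reduction_mono: "is_reduction ar R ts ps \<alpha> \<Longrightarrow> \<beta> \<le> \<alpha> \<Longrightarrow> is_reduction ar R ts ps \<beta>"
  unfolding is_reduction_def by auto

lemma strongly_p_converges_prefix:
  assumes "strongly_p_converges ar R ts ps \<alpha> s t" and "\<beta> < \<alpha>"
  shows "strongly_p_converges ar R ts ps \<beta> s (ts \<beta>)"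
  using assms is_reduction_mono[of ar R ts ps \<alpha> \<beta>]
  unfolding strongly_p_converges_def by auto

lemma wf_pterm_ctxt_at: "is_reduction ar R ts ps \<alpha> \<Longrightarrow> \<iota> < \<alpha> \<Longrightarrow> wf_pterm ar (ctxt_at ts ps \<iota>)"
  unfolding is_reduction_def rstep_def ctxt_at_def poss_def
  using wf_pterm_replace_at_bot_term by blast

lemma ctxt_at_unchanged_outside: "\<not> prefix (ps \<iota>) p \<Longrightarrow> ctxt_at ts ps \<iota> p = ts \<iota> p"
  unfolding ctxt_at_def replace_at_bot_term by (metis prefix_order.refl)

lemma liminf_ctxt_at_eq_if_stable:
  assumes red: "is_reduction ar R ts ps lam" and lim: "is_liminf ar lam (ctxt_at ts ps) T"
    and "\<beta>0 < lam" and tot: "total_term (ts \<beta>0)"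
    and Q: "Q \<subseteq> poss (ts \<beta>0)" "prefix_closed Q"
    and stable: "\<forall>\<iota>. \<beta>0 \<le> \<iota> \<and> \<iota> < lam \<longrightarrow> ps \<iota> \<notin> Q \<and> (\<forall>p\<in>Q. ts \<iota> p = ts \<beta>0 p)"
    and "p \<in> Q"
  shows "T p = ts \<beta>0 p"
proof (rule liminf_eq_eventual_values[OF lim \<open>\<beta>0 < lam\<close> _ tot Q _ \<open>p \<in> Q\<close>])
  show "wf_pterm ar (ts \<beta>0)"
    using red \<open>\<beta>0 < lam\<close> unfolding is_reduction_def rstep_def by blast
  show "\<forall>\<iota>. \<beta>0 \<le> \<iota> \<and> \<iota> < lam \<longrightarrow>
      wf_pterm ar (ctxt_at ts ps \<iota>) \<and> (\<forall>p\<in>Q. ctxt_at ts ps \<iota> p = ts \<beta>0 p)"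
    using stable wf_pterm_ctxt_at[OF red] ctxt_at_unchanged_outside prefix_closed_not_prefix[OF Q(2)]
    by metis
qed

lemma strongly_p_converges_stable:
  assumes conv: "strongly_p_converges ar R ts ps \<alpha> s t"
    and tot: "total_term (ts \<beta>0)" and Q: "Q \<subseteq> poss (ts \<beta>0)" "prefix_closed Q"
    and avoid: "\<forall>\<gamma>. \<beta>0 \<le> \<gamma> \<and> \<gamma> < \<alpha> \<longrightarrow> ps \<gamma> \<notin> Q"
  shows "\<beta>0 \<le> \<iota> \<Longrightarrow> \<iota> < \<alpha> \<Longrightarrow> \<forall>p\<in>Q. ts \<iota> p = ts \<beta>0 p"
proof (induction \<iota> rule: less_induct)
  case (less \<iota>)
  have red: "is_reduction ar R ts ps \<alpha>"
    and lims: "\<forall>lam<\<alpha>. is_limit lam \<longrightarrow> is_liminf ar lam (ctxt_at ts ps) (ts lam)"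
    using conv unfolding strongly_p_converges_def by blast+
  consider "\<iota> = \<beta>0" | "\<beta>0 < \<iota>" "is_limit \<iota>" | "\<beta>0 < \<iota>" "\<not> is_limit \<iota>"
    using less.prems(1) by fastforce
  then show ?case
  proof cases
    case 1
    then show ?thesis by simp
  next
    case 2
    then have "is_liminf ar \<iota> (ctxt_at ts ps) (ts \<iota>)" using lims less.prems(2) by blast
    moreover have "is_reduction ar R ts ps \<iota>" using is_reduction_mono[OF red] less.prems(2) by simp
    moreover have "\<forall>\<kappa>. \<beta>0 \<le> \<kappa> \<and> \<kappa> < \<iota> \<longrightarrow> ps \<kappa> \<notin> Q \<and> (\<forall>p\<in>Q. ts \<kappa> p = ts \<beta>0 p)"
    proof (intro allI impI)
      fix \<kappa>
      assume "\<beta>0 \<le> \<kappa> \<and> \<kappa> < \<iota>"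
      moreover from this have "\<kappa> < \<alpha>" using less.prems(2) by auto
      ultimately show "ps \<kappa> \<notin> Q \<and> (\<forall>p\<in>Q. ts \<kappa> p = ts \<beta>0 p)"
        using avoid less.IH by blast
    qed
    ultimately show ?thesis using liminf_ctxt_at_eq_if_stable \<open>\<beta>0 < \<iota>\<close> tot Q by blast
  next
    case 3
    then obtain j where "j < \<iota>" "osucc j = \<iota>" using non_limit_osucc by blast
    then have "\<beta>0 \<le> j" using osucc_le \<open>\<beta>0 < \<iota>\<close> by (metis leD le_less_linear)
    have "j < \<alpha>" using \<open>j < \<iota>\<close> less.prems(2) by simp
    then have "ps j \<notin> Q" using avoid \<open>\<beta>0 \<le> j\<close> by blast
    have "rstep ar R (ts j) (ps j) (ts \<iota>)"
      using red \<open>j < \<alpha>\<close> \<open>osucc j = \<iota>\<close> unfolding is_reduction_def by force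
    then have "ts \<iota> p = ts j p" if "p \<in> Q" for p
      using rstep_unchanged_outside prefix_closed_not_prefix[OF Q(2) that \<open>ps j \<notin> Q\<close>] by blast
    then show ?thesis using less.IH[OF \<open>j < \<iota>\<close> \<open>\<beta>0 \<le> j\<close> \<open>j < \<alpha>\<close>] by simp
  qed
qed

lemma strongly_p_converges_limit_stable:
  assumes conv: "strongly_p_converges ar R ts ps lam s T" and "is_limit lam"
    and "\<beta>0 < lam" and tot: "total_term (ts \<beta>0)" and Q: "Q \<subseteq> poss (ts \<beta>0)" "prefix_closed Q"
    and avoid: "\<forall>\<gamma>. \<beta>0 \<le> \<gamma> \<and> \<gamma> < lam \<longrightarrow> ps \<gamma> \<notin> Q"
    and "p \<in> Q"
  shows "T p = ts \<beta>0 p"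
proof -
  have red: "is_reduction ar R ts ps lam" and lim: "is_liminf ar lam (ctxt_at ts ps) T"
    using conv \<open>is_limit lam\<close> unfolding strongly_p_converges_def by auto
  have "\<forall>\<iota>. \<beta>0 \<le> \<iota> \<and> \<iota> < lam \<longrightarrow> ps \<iota> \<notin> Q \<and> (\<forall>p\<in>Q. ts \<iota> p = ts \<beta>0 p)"
    using avoid strongly_p_converges_stable[OF conv tot Q avoid] by simp
  from liminf_ctxt_at_eq_if_stable[OF red lim \<open>\<beta>0 < lam\<close> tot Q this \<open>p \<in> Q\<close>]
  show ?thesis .
qed

lemma eventually_avoided:
  assumes "finite P" and "is_limit lam" and "\<forall>p\<in>P. \<not> volatile_in_prefix ps lam p"
  shows "\<exists>\<beta>0<lam. \<forall>\<gamma>. \<beta>0 \<le> \<gamma> \<and> \<gamma> < lam \<longrightarrow> ps \<gamma> \<notin> P"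
  using assms(1,3)
proof (induction P rule: finite_induct)
  case empty
  then show ?case using assms(2) unfolding is_limit_def by auto
next
  case (insert p P)
  then obtain \<beta>1 where "\<beta>1 < lam" "\<forall>\<gamma>. \<beta>1 \<le> \<gamma> \<and> \<gamma> < lam \<longrightarrow> ps \<gamma> \<notin> P" by auto
  moreover obtain \<beta>2 where "\<beta>2 < lam" "\<forall>\<gamma>. \<beta>2 \<le> \<gamma> \<and> \<gamma> < lam \<longrightarrow> ps \<gamma> \<noteq> p"
    using insert.prems assms(2) unfolding volatile_in_prefix_def by auto
  ultimately show ?case by (intro exI[of _ "max \<beta>1 \<beta>2"]) auto
qed

lemma volatile_limit_not_total:
  assumes conv: "strongly_p_converges ar R ts ps lam s T"
    and tot: "\<forall>\<iota><lam. total_term (ts \<iota>)" and "volatile_in_prefix ps lam \<pi>0"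
  shows "\<not> total_term T"
proof
  assume totT: "total_term T"
  obtain \<pi> where vol: "volatile_in_prefix ps lam \<pi>"
    and shortest: "\<And>\<pi>'. length \<pi>' < length \<pi> \<Longrightarrow> \<not> volatile_in_prefix ps lam \<pi>'"
    using ex_has_least_nat[of "volatile_in_prefix ps lam" \<pi>0 length] \<open>volatile_in_prefix ps lam \<pi>0\<close>
    by (metis not_le)
  have "is_limit lam" using vol unfolding volatile_in_prefix_def by blast
  then have lim: "is_liminf ar lam (ctxt_at ts ps) T"
    using conv unfolding strongly_p_converges_def by auto
  define Q where "Q = {p. strict_prefix p \<pi>}"
  have "finite Q" unfolding Q_def
    by (rule finite_subset[of _ "set (prefixes \<pi>)"]) (auto simp: strict_prefix_def)
  moreover have "\<forall>p\<in>Q. \<not> volatile_in_prefix ps lam p"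
    using shortest prefix_length_less unfolding Q_def by blast
  ultimately obtain \<beta>1 where "\<beta>1 < lam" and avoid: "\<forall>\<gamma>. \<beta>1 \<le> \<gamma> \<and> \<gamma> < lam \<longrightarrow> ps \<gamma> \<notin> Q"
    using eventually_avoided \<open>is_limit lam\<close> by metis
  then obtain \<gamma> where "\<beta>1 \<le> \<gamma>" "\<gamma> < lam" "ps \<gamma> = \<pi>"
    using vol unfolding volatile_in_prefix_def by blast
  have "rstep ar R (ts \<gamma>) (ps \<gamma>) (ts (osucc \<gamma>))"
    using conv \<open>\<gamma> < lam\<close> unfolding strongly_p_converges_def is_reduction_def by blast
  then have wf\<gamma>: "wf_pterm ar (ts \<gamma>)" and "ts \<gamma> \<pi> \<noteq> None"
    using \<open>ps \<gamma> = \<pi>\<close> unfolding rstep_def poss_def by auto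
  have "Q \<subseteq> poss (ts \<gamma>)"
    using wf_pterm_prefix_defined[OF wf\<gamma> _ \<open>ts \<gamma> \<pi> \<noteq> None\<close>]
    unfolding Q_def poss_def strict_prefix_def by blast
  moreover have "prefix_closed Q"
    unfolding prefix_closed_def Q_def using prefix_order.le_less_trans by blast
  moreover have "\<forall>\<kappa>. \<gamma> \<le> \<kappa> \<and> \<kappa> < lam \<longrightarrow> ps \<kappa> \<notin> Q"
    using avoid \<open>\<beta>1 \<le> \<gamma>\<close> by auto
  ultimately have agree: "T p = ts \<gamma> p" if "p \<in> Q" for p
    using strongly_p_converges_limit_stable[OF conv \<open>is_limit lam\<close> \<open>\<gamma> < lam\<close>] tot \<open>\<gamma> < lam\<close> that
    by simp
  have "wf_pterm ar T" using lim unfolding is_liminf_def is_lub_def by blast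
  then have "T \<pi> \<noteq> None"
    using wf_pterm_defined_if_agree_on_strict_prefixes[OF wf\<gamma> _ \<open>ts \<gamma> \<pi> \<noteq> None\<close>] agree
    unfolding Q_def by simp
  then have "T \<pi> = Some Bot" by (rule liminf_ctxt_at_volatile_Bot[OF lim vol])
  then show False using totT unfolding total_term_def by blast
qed

lemma limit_total_if_not_volatile:
  assumes conv: "strongly_p_converges ar R ts ps lam s T" and "is_limit lam"
    and tot: "\<forall>\<iota><lam. total_term (ts \<iota>)" and nv: "\<forall>\<pi>. \<not> volatile_in_prefix ps lam \<pi>"
  shows "total_term T"
proof (rule ccontr)
  assume "\<not> total_term T"
  then obtain \<pi> where T\<pi>: "T \<pi> = Some Bot" unfolding total_term_def by blast
  obtain \<beta>0 where "\<beta>0 < lam" and avoid: "\<forall>\<gamma>. \<beta>0 \<le> \<gamma> \<and> \<gamma> < lam \<longrightarrow> ps \<gamma> \<notin> set (prefixes \<pi>)"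
    using eventually_avoided[of "set (prefixes \<pi>)"] \<open>is_limit lam\<close> nv by blast
  then have tot0: "total_term (ts \<beta>0)" and wf0: "wf_pterm ar (ts \<beta>0)"
    using tot conv unfolding strongly_p_converges_def is_reduction_def rstep_def by auto
  define Q where "Q = {p. prefix p \<pi> \<and> ts \<beta>0 p \<noteq> None}"
  have "Q \<subseteq> poss (ts \<beta>0)" unfolding Q_def poss_def by blast
  moreover have "prefix_closed Q" unfolding prefix_closed_def Q_def
    using wf_pterm_prefix_defined[OF wf0] prefix_order.trans by blast
  ultimately have agree: "T p = ts \<beta>0 p" if "p \<in> Q" for p
    using strongly_p_converges_limit_stable[OF conv \<open>is_limit lam\<close> \<open>\<beta>0 < lam\<close> tot0] avoid that
    unfolding Q_def by force
  have "wf_pterm ar T"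
    using conv \<open>is_limit lam\<close> unfolding strongly_p_converges_def is_liminf_def is_lub_def by auto
  then have "ts \<beta>0 \<pi> \<noteq> None"
    using wf_pterm_defined_if_agree_on_strict_prefixes[OF _ wf0, of T \<pi>] T\<pi> agree
    unfolding Q_def strict_prefix_def by fastforce
  then have "ts \<beta>0 \<pi> = Some Bot" using agree T\<pi> unfolding Q_def by fastforce
  then show False using tot0 unfolding total_term_def by blast
qed

lemma strongly_p_converges_total:
  assumes trs: "is_TRS ar R" and "total_term s" and conv: "strongly_p_converges ar R ts ps \<alpha> s t"
    and tot: "\<forall>\<iota><\<alpha>. total_term (ts \<iota>)" and nv: "\<forall>\<pi>. \<not> volatile_in_prefix ps \<alpha> \<pi>"
  shows "total_term t"
proof (cases "is_limit \<alpha>")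
  case True
  then show ?thesis using limit_total_if_not_volatile[OF conv] tot nv by blast
next
  case False
  then have t: "t = ts \<alpha>" using conv unfolding strongly_p_converges_def by simp
  show ?thesis
  proof (cases "\<exists>j. j < \<alpha>")
    case True
    then obtain j where "j < \<alpha>" "osucc j = \<alpha>" using non_limit_osucc \<open>\<not> is_limit \<alpha>\<close> by blast
    then have "rstep ar R (ts j) (ps j) t"
      using conv t unfolding strongly_p_converges_def is_reduction_def by auto
    then show ?thesis using rstep_total_term[OF trs] tot \<open>j < \<alpha>\<close> by blast
  next
    case False
    then have "(LEAST j. True) = \<alpha>" by (rule Least_True_eq)
    then show ?thesis using conv t \<open>total_term s\<close> unfolding strongly_p_converges_def by simp
  qed
qed

theorem lemma3p15:
  fixes ar :: "'f \<Rightarrow> nat"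
    and R :: "(('f, 'v) pterm \<times> ('f, 'v) pterm) set"
    and ts :: "'o::wellorder \<Rightarrow> ('f, 'v) pterm"
    and ps :: "'o \<Rightarrow> nat list"
    and \<alpha> :: 'o
    and s t :: "('f, 'v) pterm"
  assumes "is_TRS ar R"
    and "wf_pterm ar s"
    and "total_term s"
    and "strongly_p_converges ar R ts ps \<alpha> s t"
  shows "reduction_total ts \<alpha> t \<longleftrightarrow>
         \<not> (\<exists>\<beta>\<le>\<alpha>. \<exists>\<pi>. volatile_in_prefix ps \<beta> \<pi>)"
proof
  assume "reduction_total ts \<alpha> t"
  then have tot: "\<forall>\<iota><\<alpha>. total_term (ts \<iota>)" "total_term t"
    unfolding reduction_total_def by blast+
  show "\<not> (\<exists>\<beta>\<le>\<alpha>. \<exists>\<pi>. volatile_in_prefix ps \<beta> \<pi>)"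
  proof (intro notI, elim exE conjE)
    fix \<beta> \<pi>
    assume "\<beta> \<le> \<alpha>" and vol: "volatile_in_prefix ps \<beta> \<pi>"
    show False
    proof (cases "\<beta> = \<alpha>")
      case True
      then show False using volatile_limit_not_total[OF assms(4)] tot vol by blast
    next
      case False
      with \<open>\<beta> \<le> \<alpha>\<close> have "\<beta> < \<alpha>" by simp
      then show False
        using volatile_limit_not_total[OF strongly_p_converges_prefix[OF assms(4)]] tot vol by force
    qed
  qed
next
  assume nv: "\<not> (\<exists>\<beta>\<le>\<alpha>. \<exists>\<pi>. volatile_in_prefix ps \<beta> \<pi>)"
  have tot: "total_term (ts \<iota>)" if "\<iota> < \<alpha>" for \<iota>
    using that
  proof (induction \<iota> rule: less_induct)
    case (less \<iota>)
    show ?case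
      by (rule strongly_p_converges_total[OF assms(1,3) strongly_p_converges_prefix[OF assms(4) less.prems]])
        (use less nv in auto)
  qed
  have "total_term t"
    by (rule strongly_p_converges_total[OF assms(1,3,4)]) (use tot nv in auto)
  then show "reduction_total ts \<alpha> t" using tot unfolding reduction_total_def by blast
qed

end
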